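(* Define rooted trees $(S_\alpha,r_\alpha)$ for all ordinals $\alpha\ge 1$ by transfinite recursion: $S_1$ is a single vertex $r_1$; for $\alpha>1$, $S_\alpha$ is obtained from pairwise disjoint copies of the rooted trees $(S_i,r_i)$, $1\le i<\alpha$, by adding a new vertex $r_\alpha$ (the root of $S_\alpha$) joined by an edge to each $r_i$, $1\le i<\alpha$. Then for every ordinal $\alpha$ (including $\alpha=0$), the tree $S_{\alpha+1}$ is cop-win and $\eta(S_{\alpha+1})=\alpha$.
   Context: All graphs are simple and undirected, possibly infinite. For a vertex $v$ of a graph $G$, $N[v]$ denotes its closed neighbourhood. Define binary relations $\leq_\alpha$ on $V(G)$, for every ordinal $\alpha$, by transfinite recursion: $u\leq_0 v$ iff $u=v$; for $\alpha>0$, $u\leq_\alpha v$ iff for every $x\in N[u]$ there exist $y\in N[v]$ and an ordinal $\beta<\alpha$ with $x\leq_\beta y$. For $v\in V(G)$, $\eta(v)$ denotes the least ordinal $\alpha$ such that $u\leq_\alpha v$ for all $u\in V(G)$ (when such $\alpha$ exists), and $\eta(G)=\min_{v\in V(G)}\eta(v)$. A graph is cop-win if in the game of Cops and Robbers a single cop has a strategy guaranteeing capture of the robber (a tree is cop-win iff it contains no ray). *)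

theory Defs
  imports Main
begin

definition cnbhd :: "'a set \<Rightarrow> ('a \<Rightarrow> 'a \<Rightarrow> bool) \<Rightarrow> 'a \<Rightarrow> 'a set" where
  "cnbhd V E v = insert v {w \<in> V. E v w}"

text \<open>Ordinals are represented by elements of an arbitrary well-ordered type 'o;
the ordinal 0 is the least element.\<close>

definition ordle :: "'a set \<Rightarrow> ('a \<Rightarrow> 'a \<Rightarrow> bool) \<Rightarrow> 'o::wellorder \<Rightarrow> 'a \<Rightarrow> 'a \<Rightarrow> bool" where
  "ordle V E = wfrec {(b, a). b < a}
     (\<lambda>f a u v. if (\<forall>b. \<not> b < a) then u = v
                else (\<forall>x\<in>cnbhd V E u. \<exists>y\<in>cnbhd V E v. \<exists>b. b < a \<and> f b x y))"

definition eta_defined :: "'a set \<Rightarrow> ('a \<Rightarrow> 'a \<Rightarrow> bool) \<Rightarrow> 'o::wellorder itself \<Rightarrow> 'a \<Rightarrow> bool" where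
  "eta_defined V E T v = (\<exists>a::'o. \<forall>u\<in>V. ordle V E a u v)"

definition eta_vertex :: "'a set \<Rightarrow> ('a \<Rightarrow> 'a \<Rightarrow> bool) \<Rightarrow> 'a \<Rightarrow> 'o::wellorder" where
  "eta_vertex V E v = (LEAST a. \<forall>u\<in>V. ordle V E a u v)"

definition eta_graph :: "'a set \<Rightarrow> ('a \<Rightarrow> 'a \<Rightarrow> bool) \<Rightarrow> 'o::wellorder" where
  "eta_graph V E = (LEAST a. \<exists>v\<in>V. eta_defined V E TYPE('o) v \<and> eta_vertex V E v = a)"

text \<open>The cop chooses c 0, then the robber chooses r 0; in round n the cop moves
to c (n+1) in N[c n], then the robber moves to r (n+1) in N[r n].\<close>

definition cop_win :: "'a set \<Rightarrow> ('a \<Rightarrow> 'a \<Rightarrow> bool) \<Rightarrow> bool" where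
  "cop_win V E = (\<exists>c0\<in>V. \<exists>\<sigma> :: 'a list \<Rightarrow> 'a list \<Rightarrow> 'a.
     (\<forall>cs rs. cs \<noteq> [] \<longrightarrow> last cs \<in> V \<longrightarrow> \<sigma> cs rs \<in> cnbhd V E (last cs)) \<and>
     (\<forall>c r :: nat \<Rightarrow> 'a.
        c 0 = c0 \<and> r 0 \<in> V \<and>
        (\<forall>n. c (Suc n) = \<sigma> (map c [0..<Suc n]) (map r [0..<Suc n])) \<and>
        (\<forall>n. r (Suc n) \<in> cnbhd V E (r n))
        \<longrightarrow> (\<exists>n. c n = r n \<or> c (Suc n) = r n)))"

text \<open>S_a (a \<ge> 1): root [] ; for each 1 \<le> i < a a copy of S_i whose vertices are
tagged by prefixing i; the root [i] of the copy is joined to the root [].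
"1 \<le> i" means i is not the least element of 'o.\<close>

inductive svert :: "'o::wellorder \<Rightarrow> 'o list \<Rightarrow> bool" where
  root: "svert a []"
| copy: "\<lbrakk>\<exists>b. b < i; i < a; svert i xs\<rbrakk> \<Longrightarrow> svert a (i # xs)"

inductive sedge :: "'o::wellorder \<Rightarrow> 'o list \<Rightarrow> 'o list \<Rightarrow> bool" where
  down: "\<lbrakk>\<exists>b. b < i; i < a\<rbrakk> \<Longrightarrow> sedge a [] [i]"
| up: "\<lbrakk>\<exists>b. b < i; i < a\<rbrakk> \<Longrightarrow> sedge a [i] []"
| copy: "\<lbrakk>\<exists>b. b < i; i < a; sedge i xs ys\<rbrakk> \<Longrightarrow> sedge a (i # xs) (i # ys)"

definition SV :: "'o::wellorder \<Rightarrow> 'o list set" where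
  "SV a = {xs. svert a xs}"

end

theory Submission
  imports Defs "HOL-Library.Sublist"
begin

text \<open>A vertex in the branch hanging from the child \<open>v @ [j]\<close> of \<open>v\<close> is \<open>\<le>\<^sub>j\<close>-dominated by \<open>v\<close>:
  the dominating moves retract the branch onto \<open>v @ [j]\<close>, and all labels further down are
  smaller than \<open>j\<close>. As the children of the root of \<open>S\<^bsub>\<alpha>+1\<^esub>\<close> carry labels at most \<open>\<alpha>\<close>, the root
  dominates everything at level \<open>\<alpha>\<close>. Conversely, a robber at a vertex labelled \<open>i\<close> escapes into
  the branch of its child labelled \<open>\<beta> < i\<close>, which no vertex outside its own branch can follow
  at level \<open>\<beta>\<close>; applied to the children \<open>[\<alpha>]\<close> and \<open>[\<beta>]\<close> of the root this shows that no
  vertex dominates everything at a level \<open>\<beta> < \<alpha>\<close>.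
  The cop wins by starting at the root and always stepping towards the robber: the labels
  along the cop's path then decrease strictly, which cannot go on forever.\<close>

lemma ordle_unfold:
  "ordle V E a u v = (if \<forall>b. \<not> b < a then u = v
     else \<forall>x\<in>cnbhd V E u. \<exists>y\<in>cnbhd V E v. \<exists>b. b < a \<and> ordle V E b x y)"
  unfolding ordle_def
  by (subst wfrec[OF wellorder_class.wf])
    (simp add: cut_apply, intro impI iffI ballI; fastforce simp: cut_apply)

lemma ordleD:
  assumes "ordle V E a u v" and "b < a" and "x \<in> cnbhd V E u"
  shows "\<exists>y\<in>cnbhd V E v. \<exists>c<a. ordle V E c x y"
proof -
  have "\<not> (\<forall>b. \<not> b < a)" using assms(2) by blast
  then show ?thesis using assms(1,3) by (subst (asm) ordle_unfold) simp
qed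

lemma cnbhd_self: "v \<in> cnbhd V E v"
  by (simp add: cnbhd_def)

lemma ordle_refl: "ordle V E (a::'o::wellorder) u u"
proof (induction a arbitrary: u rule: less_induct)
  case (less a)
  show ?case
  proof (cases "\<forall>b. \<not> b < a")
    case False
    then obtain b where "b < a" by blast
    then show ?thesis using less by (subst ordle_unfold) auto
  qed (subst ordle_unfold, simp)
qed

lemma ordle_mono:
  assumes "ordle V E (a::'o::wellorder) u v" and "a \<le> b"
  shows "ordle V E b u v"
proof (cases "\<forall>c. \<not> c < a")
  case True
  then have "u = v" using assms(1) by (subst (asm) ordle_unfold) simp
  then show ?thesis by (simp add: ordle_refl)
next
  case False
  then obtain c where "c < a" by blast
  have "\<exists>y\<in>cnbhd V E v. \<exists>c<b. ordle V E c x y" if "x \<in> cnbhd V E u" for x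
    using ordleD[OF assms(1) \<open>c < a\<close> that] assms(2) by (meson less_le_trans)
  moreover have "c < b" using \<open>c < a\<close> assms(2) by simp
  ultimately show ?thesis by (subst ordle_unfold) auto
qed

lemma eta_graph_eqI:
  fixes \<alpha> :: "'o::wellorder"
  assumes "v\<^sub>0 \<in> V" and "\<forall>u\<in>V. ordle V E \<alpha> u v\<^sub>0"
    and "\<And>v \<beta>. v \<in> V \<Longrightarrow> \<beta> < \<alpha> \<Longrightarrow> \<exists>u\<in>V. \<not> ordle V E \<beta> u v"
  shows "(\<exists>v\<in>V. eta_defined V E TYPE('o) v) \<and> (eta_graph V E :: 'o) = \<alpha>"
proof -
  have least: "\<alpha> \<le> a" if "v \<in> V" "\<forall>u\<in>V. ordle V E a u v" for v a
    using assms(3)[OF that(1)] that(2) by (meson not_le)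
  have eta_v\<^sub>0: "(eta_vertex V E v\<^sub>0 :: 'o) = \<alpha>"
    unfolding eta_vertex_def by (rule Least_equality) (use assms(1,2) least in auto)
  have eta_ge: "\<alpha> \<le> (eta_vertex V E v :: 'o)" if "v \<in> V" "eta_defined V E TYPE('o) v" for v
    using that least LeastI_ex[of "\<lambda>a::'o. \<forall>u\<in>V. ordle V E a u v"]
    unfolding eta_defined_def eta_vertex_def by blast
  have "(eta_graph V E :: 'o) = \<alpha>"
    unfolding eta_graph_def
    by (rule Least_equality) (use assms(1,2) eta_v\<^sub>0 eta_ge in \<open>auto simp: eta_defined_def\<close>)
  then show ?thesis using assms(1,2) by (auto simp: eta_defined_def)
qed

text \<open>A vertex of \<open>S\<^sub>a\<close> is the list of copy indices on its path from the root; these decrease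
  strictly, and the last one is the vertex's label, i.e. the index \<open>i\<close> of the copy of \<open>S\<^sub>i\<close>
  whose root it is.\<close>

definition descending_below :: "'o::wellorder \<Rightarrow> 'o list \<Rightarrow> bool" where
  "descending_below a xs \<longleftrightarrow> sorted_wrt (>) (a # xs) \<and> (\<forall>x\<in>set xs. \<exists>b. b < x)"

lemma svert_iff_descending_below: "svert a xs \<longleftrightarrow> descending_below a xs"
proof (induction xs arbitrary: a)
  case Nil
  show ?case by (auto simp: descending_below_def intro: svert.root)
next
  case (Cons i xs)
  have "svert a (i # xs) \<longleftrightarrow> (\<exists>b. b < i) \<and> i < a \<and> svert i xs"
    by (auto elim: svert.cases intro: svert.intros)
  then show ?case using Cons by (auto simp: descending_below_def intro: less_trans)
qed

lemma mem_SV_iff: "xs \<in> SV a \<longleftrightarrow> descending_below a xs"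
  by (simp add: SV_def svert_iff_descending_below)

lemma Nil_in_SV: "[] \<in> SV a"
  by (simp add: mem_SV_iff descending_below_def)

lemma descending_below_appendD: "descending_below a (xs @ ys) \<Longrightarrow> descending_below a xs"
  by (simp add: descending_below_def sorted_wrt_append)

lemma descending_below_less: "descending_below a (xs @ j # k # ys) \<Longrightarrow> k < j"
  by (simp add: descending_below_def sorted_wrt_append)

lemma descending_below_not_least: "descending_below a (xs @ j # ys) \<Longrightarrow> \<exists>b. b < j"
  by (simp add: descending_below_def)

lemma descending_below_snocI:
  "descending_below a (xs @ [i]) \<Longrightarrow> b < i \<Longrightarrow> \<exists>c. c < b \<Longrightarrow> descending_below a (xs @ [i, b])"
  by (auto simp: descending_below_def sorted_wrt_append intro: less_trans)

lemma sedge_imp_svert_adjacent: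
  "sedge a xs ys \<Longrightarrow> svert a xs \<and> svert a ys \<and> (\<exists>j. ys = xs @ [j] \<or> xs = ys @ [j])"
  by (induction rule: sedge.induct) (auto intro: svert.intros)

lemma sedge_snocI:
  "svert a xs \<Longrightarrow> svert a (xs @ [j]) \<Longrightarrow> sedge a xs (xs @ [j]) \<and> sedge a (xs @ [j]) xs"
proof (induction xs arbitrary: a)
  case Nil
  then have "(\<exists>b. b < j) \<and> j < a" by (auto elim: svert.cases)
  then show ?case by (auto intro: sedge.intros)
next
  case (Cons i xs)
  then have "(\<exists>b. b < i) \<and> i < a \<and> svert i xs \<and> svert i (xs @ [j])"
    by (auto elim: svert.cases)
  then show ?case using Cons.IH by (auto intro: sedge.intros)
qed

lemma cnbhd_SV_iff:
  "u \<in> SV a \<Longrightarrow> x \<in> cnbhd (SV a) (sedge a) u \<longleftrightarrow>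
     x = u \<or> descending_below a x \<and> (\<exists>j. x = u @ [j] \<or> u = x @ [j])"
  unfolding cnbhd_def SV_def
  using sedge_imp_svert_adjacent[of a u x] sedge_snocI[of a u] sedge_snocI[of a x]
  by (auto simp: svert_iff_descending_below)

lemma cnbhd_SV_cases:
  "y \<in> cnbhd (SV a) (sedge a) v \<Longrightarrow> y = v \<or> (\<exists>j. y = v @ [j] \<or> v = y @ [j])"
  unfolding cnbhd_def using sedge_imp_svert_adjacent by blast

lemma cnbhd_SV_enter_branch:
  assumes "y \<in> cnbhd (SV a) (sedge a) v" and "\<not> prefix p v" and "prefix p y"
  shows "y = p"
  using cnbhd_SV_cases[OF assms(1)] assms(2,3) by auto

lemma ordle_branch_parent:
  "descending_below a (v @ j # r) \<Longrightarrow> ordle (SV a) (sedge a) j (v @ j # r) v"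
proof (induction j arbitrary: v r rule: less_induct)
  case (less j)
  define w where "w = v @ [j]"
  obtain b\<^sub>0 where "b\<^sub>0 < j" using descending_below_not_least[OF less.prems] by blast
  have "v \<in> SV a" "descending_below a w"
    using descending_below_appendD[of a v "j # r"] descending_below_appendD[of a w r] less.prems
    by (simp_all add: mem_SV_iff w_def)
  then have w_nb: "w \<in> cnbhd (SV a) (sedge a) v" by (simp add: cnbhd_SV_iff w_def)
  have branch: "\<exists>b<j. ordle (SV a) (sedge a) b x w"
    if "descending_below a x" "prefix w x" for x
  proof -
    obtain r' where x: "x = w @ r'" using \<open>prefix w x\<close> prefixE by blast
    show ?thesis
    proof (cases r')
      case Nil
      then show ?thesis using \<open>b\<^sub>0 < j\<close> x by (auto intro: ordle_refl)
    next
      case (Cons k r'')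
      then have "k < j" using that(1) x descending_below_less[of a v j k r''] by (simp add: w_def)
      then show ?thesis using less.IH[of k w r''] that(1) x Cons by auto
    qed
  qed
  have "\<exists>y\<in>cnbhd (SV a) (sedge a) v. \<exists>b<j. ordle (SV a) (sedge a) b x y"
    if "x \<in> cnbhd (SV a) (sedge a) (v @ j # r)" for x
  proof -
    have "x = v \<or> descending_below a x \<and> prefix w x"
      using that cnbhd_SV_iff[of "v @ j # r" a x] less.prems
      by (cases r rule: rev_cases) (auto simp: mem_SV_iff w_def prefix_def)
    then show ?thesis
      using branch w_nb \<open>b\<^sub>0 < j\<close> by (auto simp: cnbhd_def intro: ordle_refl)
  qed
  then show ?case using \<open>b\<^sub>0 < j\<close> by (subst ordle_unfold) auto
qed

lemma not_ordle_outside_branch: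
  "descending_below a (w @ [i]) \<Longrightarrow> \<beta> < i \<Longrightarrow> \<not> prefix (w @ [i]) v \<Longrightarrow>
    \<not> ordle (SV a) (sedge a) \<beta> (w @ [i]) v"
proof (induction \<beta> arbitrary: w i v rule: less_induct)
  case (less \<beta>)
  show ?case
  proof (cases "\<forall>b. \<not> b < \<beta>")
    case True
    then show ?thesis using less.prems(3) by (subst ordle_unfold) auto
  next
    case False
    then have x: "descending_below a (w @ [i, \<beta>])"
      using descending_below_snocI less.prems(1,2) by blast
    then have x_nb: "w @ [i, \<beta>] \<in> cnbhd (SV a) (sedge a) (w @ [i])"
      using less.prems(1) by (simp add: cnbhd_SV_iff mem_SV_iff)
    show ?thesis
    proof
      assume ord: "ordle (SV a) (sedge a) \<beta> (w @ [i]) v"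
      obtain b where "b < \<beta>" using False by blast
      then obtain y \<gamma> where y: "y \<in> cnbhd (SV a) (sedge a) v" and "\<gamma> < \<beta>"
        and "ordle (SV a) (sedge a) \<gamma> (w @ [i, \<beta>]) y"
        using ordleD[OF ord \<open>b < \<beta>\<close> x_nb] by blast
      moreover have "\<not> prefix (w @ [i, \<beta>]) y"
      proof
        assume in_branch: "prefix (w @ [i, \<beta>]) y"
        then have "prefix (w @ [i]) y"
          by (metis append.assoc append_Cons append_Nil prefix_order.order_trans prefixI)
        then have "y = w @ [i]" by (rule cnbhd_SV_enter_branch[OF y less.prems(3)])
        then show False using in_branch by (auto dest: prefix_length_le)
      qed
      ultimately show False using less.IH[of \<gamma> "w @ [i]" \<beta> y] x by auto
    qed
  qed
qed

lemma not_ordle_outside_branch_le: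
  assumes "descending_below a (w @ [i])" and "\<beta> \<le> i" and "\<not> prefix (w @ [i]) v" and "v \<noteq> w"
  shows "\<not> ordle (SV a) (sedge a) \<beta> (w @ [i]) v"
proof
  assume ord: "ordle (SV a) (sedge a) \<beta> (w @ [i]) v"
  show False
  proof (cases "\<forall>b. \<not> b < \<beta>")
    case True
    then show ?thesis using ord assms(3) by (subst (asm) ordle_unfold) auto
  next
    case False
    then obtain b where "b < \<beta>" by blast
    then obtain y \<gamma> where y: "y \<in> cnbhd (SV a) (sedge a) v" and "\<gamma> < \<beta>"
      and "ordle (SV a) (sedge a) \<gamma> (w @ [i]) y"
      using ordleD[OF ord _ cnbhd_self] by blast
    moreover have "\<not> prefix (w @ [i]) y"
      using cnbhd_SV_enter_branch[OF y assms(3)] cnbhd_SV_cases[OF y] assms(3,4) by auto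
    ultimately show False
      using not_ordle_outside_branch[OF assms(1)] assms(2) by (meson less_le_trans)
  qed
qed

lemma ordle_root:
  assumes "\<And>j. j < a \<Longrightarrow> j \<le> \<alpha>" and "u \<in> SV a"
  shows "ordle (SV a) (sedge a) \<alpha> u []"
proof (cases u)
  case Nil
  then show ?thesis by (simp add: ordle_refl)
next
  case (Cons j r)
  then have "descending_below a ([] @ j # r)" using assms(2) by (simp add: mem_SV_iff)
  then have "ordle (SV a) (sedge a) j u []" and "j \<le> \<alpha>"
    using ordle_branch_parent[of a "[]" j r] Cons assms(1) by (simp_all add: descending_below_def)
  then show ?thesis by (rule ordle_mono)
qed

lemma ex_not_ordle:
  assumes "v \<in> SV a" and "\<beta> < \<alpha>" and "\<alpha> < a"
  shows "\<exists>u\<in>SV a. \<not> ordle (SV a) (sedge a) \<beta> u v"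
proof (cases "prefix [\<alpha>] v")
  case False
  have "descending_below a ([] @ [\<alpha>])" using assms by (auto simp: descending_below_def)
  then show ?thesis
    using not_ordle_outside_branch[of a "[]" \<alpha> \<beta> v] False assms(2) by (auto simp: mem_SV_iff)
next
  case True
  then have "v \<noteq> []" by auto
  show ?thesis
  proof (cases "\<forall>b. \<not> b < \<beta>")
    case True
    then have "\<not> ordle (SV a) (sedge a) \<beta> [] v" using \<open>v \<noteq> []\<close> by (subst ordle_unfold) simp
    then show ?thesis using Nil_in_SV by blast
  next
    case False
    then have "descending_below a ([] @ [\<beta>])"
      using assms(2,3) by (auto simp: descending_below_def intro: less_trans)
    moreover have "\<not> prefix [\<beta>] v" using \<open>prefix [\<alpha>] v\<close> assms(2) by (auto simp: prefix_def)
    ultimately show ?thesis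
      using not_ordle_outside_branch_le[of a "[]" \<beta> \<beta> v] \<open>v \<noteq> []\<close> by (auto simp: mem_SV_iff)
  qed
qed

definition chase_step :: "'a list set \<Rightarrow> 'a list \<Rightarrow> 'a list \<Rightarrow> 'a list" where
  "chase_step V c r = (if r \<in> V \<and> strict_prefix c r then take (Suc (length c)) r else c)"

lemma chase_step_Cons: "r \<in> V \<Longrightarrow> r = c @ k # rest \<Longrightarrow> chase_step V c r = c @ [k]"
  unfolding chase_step_def by (auto intro: strict_prefixI')

lemma chase_step_cnbhd: "c \<in> SV a \<Longrightarrow> chase_step (SV a) c r \<in> cnbhd (SV a) (sedge a) c"
proof (cases "r \<in> SV a \<and> strict_prefix c r")
  case True
  then obtain k rest where r: "r \<in> SV a" "r = c @ k # rest" by (blast elim: strict_prefixE')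
  then have "descending_below a (c @ [k])"
    using descending_below_appendD[of a "c @ [k]" rest] by (simp add: mem_SV_iff)
  moreover assume "c \<in> SV a"
  ultimately show ?thesis using chase_step_Cons[OF r] by (simp add: cnbhd_SV_iff)
next
  case False
  then show ?thesis unfolding chase_step_def cnbhd_def by auto
qed

lemma chase_keeps_robber_below:
  assumes "c 0 = []" and "\<And>n. r n \<in> SV a"
    and "\<And>n. c (Suc n) = chase_step (SV a) (c n) (r n)"
    and "\<And>n. r (Suc n) \<in> cnbhd (SV a) (sedge a) (r n)"
    and "\<And>n. c n \<noteq> r n" and "\<And>n. c (Suc n) \<noteq> r n"
  shows "strict_prefix (c n) (r n)"
proof (induction n)
  case 0
  show ?case using assms(1) assms(5)[of 0] by (cases "r 0") auto
next
  case (Suc n)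
  then obtain k rest where "r n = c n @ k # rest" by (blast elim: strict_prefixE')
  then have "c (Suc n) = c n @ [k]" using assms(2,3) chase_step_Cons by metis
  then have "strict_prefix (c (Suc n)) (r n)"
    using \<open>r n = c n @ k # rest\<close> assms(6)[of n] by (cases rest) (auto simp: strict_prefix_def)
  then have "prefix (c (Suc n)) (r (Suc n))"
    using cnbhd_SV_cases[OF assms(4)[of n]] by (auto simp: strict_prefix_def)
  then show ?case using assms(5) by (auto intro: strict_prefixI)
qed

lemma cop_win_SV: "cop_win (SV (a::'o::wellorder)) (sedge a)"
  unfolding cop_win_def
proof (intro bexI[of _ "[]"] exI[of _ "\<lambda>cs rs. chase_step (SV a) (last cs) (last rs)"]
    conjI allI impI)
  fix c r :: "nat \<Rightarrow> 'o list"
  assume play: "c 0 = [] \<and> r 0 \<in> SV a \<and>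
     (\<forall>n. c (Suc n) = chase_step (SV a) (last (map c [0..<Suc n])) (last (map r [0..<Suc n]))) \<and>
     (\<forall>n. r (Suc n) \<in> cnbhd (SV a) (sedge a) (r n))"
  then have c_Suc: "c (Suc n) = chase_step (SV a) (c n) (r n)" for n by simp
  have r_move: "r (Suc n) \<in> cnbhd (SV a) (sedge a) (r n)" for n using play by blast
  have r_SV: "r n \<in> SV a" for n
  proof (induction n)
    case (Suc n)
    then show ?case using r_move[of n] by (auto simp: cnbhd_def)
  qed (use play in simp)
  show "\<exists>n. c n = r n \<or> c (Suc n) = r n"
  proof (rule ccontr)
    assume "\<nexists>n. c n = r n \<or> c (Suc n) = r n"
    then have below: "strict_prefix (c n) (r n)" for n
      using chase_keeps_robber_below[of c r a] play c_Suc r_move r_SV by blast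
    have "\<exists>k rest. r n = c n @ k # rest \<and> c (Suc n) = c n @ [k]" for n
      using below[of n] c_Suc chase_step_Cons[OF r_SV] by (metis strict_prefixE')
    then obtain g where c_path: "\<And>n. c (Suc n) = c n @ [g n]" by metis
    have "g (Suc n) < g n" for n
    proof -
      obtain k rest where "r (Suc (Suc n)) = c (Suc (Suc n)) @ k # rest"
        using below by (blast elim: strict_prefixE')
      then have "descending_below a (c n @ g n # g (Suc n) # k # rest)"
        using r_SV[of "Suc (Suc n)"] c_path by (simp add: mem_SV_iff)
      then show ?thesis by (rule descending_below_less)
    qed
    then show False
      using wf_iff_no_infinite_down_chain[THEN iffD1, OF wellorder_class.wf] by blast
  qed
qed (auto simp: Nil_in_SV intro: chase_step_cnbhd)

theorem lemma3p4:
  fixes \<alpha> s :: "'o::wellorder"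
  assumes "\<alpha> < s" and "\<forall>x. \<alpha> < x \<longrightarrow> s \<le> x"
  shows "cop_win (SV s) (sedge s)
         \<and> (\<exists>v\<in>SV s. eta_defined (SV s) (sedge s) TYPE('o) v)
         \<and> (eta_graph (SV s) (sedge s) :: 'o) = \<alpha>"
proof -
  have "j \<le> \<alpha>" if "j < s" for j using assms(2) that by (meson not_le)
  then have "\<forall>u\<in>SV s. ordle (SV s) (sedge s) \<alpha> u []" by (blast intro: ordle_root)
  then show ?thesis
    using cop_win_SV eta_graph_eqI[OF Nil_in_SV] ex_not_ordle[OF _ _ assms(1)] by blast
qed

end
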